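(* Let $k\ge1$. Then for all graphs $G,G'$, all $\vec v\in V(G)^{k+1}$, $\vec v'\in V(G')^{k+1}$, and all $t\in\mathbb{N}$, the following are equivalent: (i) $\mathrm{OWL}^{k+1,t}(G,\vec v)=\mathrm{OWL}^{k+1,t}(G',\vec v')$; (ii) $\mathrm{atp}_{k+1}(G,\vec v)=\mathrm{atp}_{k+1}(G',\vec v')$ and $\mathrm{WL}^{k,t}(G,\vec v[/i])=\mathrm{WL}^{k,t}(G',\vec v'[/i])$ for all $i\in[k+1]$.
   Context: Graphs are finite, undirected, simple, with a fixed number $\ell$ of vertex labels $P_1(G),\dots,P_\ell(G)\subseteq V(G)$. Colours are formal objects (nested tuples/multisets) comparable across graphs. For $\vec v=(v_1,\dots,v_m)\in V(G)^m$: $\mathrm{atp}_m(G,\vec v)$ is the 0/1-vector recording, for $1\le i<j\le m$, whether $v_i=v_j$ and whether $v_iv_j\in E(G)$, and for $i\in[m],j\in[\ell]$ whether $v_i\in P_j(G)$. $\vec vw=(v_1,\dots,v_m,w)$; $\vec v[w/i]=(v_1,\dots,v_{i-1},w,v_{i+1},\dots,v_m)$; $\vec v[/i]=(v_1,\dots,v_{i-1},v_{i+1},\dots,v_m)$. $k$-WL: $\mathrm{WL}^{k,0}=\mathrm{atp}_k$, $\mathrm{WL}^{k,t+1}(G,\vec v)=\big(\mathrm{WL}^{k,t}(G,\vec v),\{\!\{(\mathrm{atp}_{k+1}(G,\vec vw),\mathrm{WL}^{k,t}(G,\vec v[w/1]),\dots,\mathrm{WL}^{k,t}(G,\vec v[w/k])):w\in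 V(G)\}\!\}\big)$ for $\vec v\in V(G)^k$. Oblivious $m$-WL: $\mathrm{OWL}^{m,0}=\mathrm{atp}_m$, $\mathrm{OWL}^{m,t+1}(G,\vec v)=\big(\mathrm{OWL}^{m,t}(G,\vec v),M_1,\dots,M_m\big)$ with $M_i=\{\!\{\mathrm{OWL}^{m,t}(G,\vec v[w/i]):w\in V(G)\}\!\}$ for $\vec v\in V(G)^m$. *)

theory Defs
  imports Main "HOL-Library.Multiset"
begin

text \<open>Vertex-labelled graphs: vertex set, (symmetric, irreflexive) edge relation,
  and labels P_1..P_l represented as labels 0 .. labels (l-1).\<close>
record 'a graph =
  verts :: "'a set"
  edges :: "'a \<Rightarrow> 'a \<Rightarrow> bool"
  labels :: "nat \<Rightarrow> 'a set"

definition wf_graph :: "nat \<Rightarrow> 'a graph \<Rightarrow> bool" where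
  "wf_graph l G \<longleftrightarrow> finite (verts G)
     \<and> (\<forall>u v. edges G u v \<longrightarrow> u \<in> verts G \<and> v \<in> verts G)
     \<and> (\<forall>u v. edges G u v \<longrightarrow> edges G v u)
     \<and> (\<forall>u. \<not> edges G u u)
     \<and> (\<forall>j<l. labels G j \<subseteq> verts G)"

type_synonym atype = "(bool \<times> bool) list list \<times> bool list list"

definition atp :: "nat \<Rightarrow> 'a graph \<Rightarrow> 'a list \<Rightarrow> atype" where
  "atp l G vs =
    (map (\<lambda>i. map (\<lambda>j. (vs ! i = vs ! j, edges G (vs ! i) (vs ! j))) [Suc i..<length vs])
         [0..<length vs],
     map (\<lambda>i. map (\<lambda>j. vs ! i \<in> labels G j) [0..<l]) [0..<length vs])"

text \<open>Formal colours (for k-WL), comparable across graphs.\<close>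
datatype colour =
    CAtp atype
  | CWL colour "(atype \<times> colour list) multiset"


datatype ocolour =
    OAtp atype
  | OStep ocolour "ocolour multiset list"

text \<open>k-WL where k = length of the tuple; replacement at position i (0-based).\<close>
fun WL :: "nat \<Rightarrow> 'a graph \<Rightarrow> nat \<Rightarrow> 'a list \<Rightarrow> colour" where
  "WL l G 0 vs = CAtp (atp l G vs)"
| "WL l G (Suc t) vs =
     CWL (WL l G t vs)
       (image_mset (\<lambda>w. (atp l G (vs @ [w]), map (\<lambda>i. WL l G t (vs[i := w])) [0..<length vs]))
          (mset_set (verts G)))"

fun OWL :: "nat \<Rightarrow> 'a graph \<Rightarrow> nat \<Rightarrow> 'a list \<Rightarrow> ocolour" where
  "OWL l G 0 vs = OAtp (atp l G vs)"
| "OWL l G (Suc t) vs =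
     OStep (OWL l G t vs)
       (map (\<lambda>i. image_mset (\<lambda>w. OWL l G t (vs[i := w])) (mset_set (verts G))) [0..<length vs])"

text \<open>Removal of the i-th entry (0-based): v[/i+1].\<close>
definition remove_nth :: "nat \<Rightarrow> 'a list \<Rightarrow> 'a list" where
  "remove_nth i vs = take i vs @ drop (Suc i) vs"

end

theory Submission
  imports Defs
begin

text \<open>The tuples \<open>v[w/i]\<close> and \<open>v[/i] w\<close> agree up
  to a fixed permutation of positions, and deleting a position \<open>b \<noteq> i\<close> from \<open>v[w/i]\<close> gives,
  up to a fixed permutation, \<open>v[/i]\<close> with \<open>w\<close> substituted at the position of \<open>b\<close>. Atomic
  types and WL colours are invariant under injective reindexing of both tuples, so equal colours
  transfer along these permutations. Finally, an equality of colour multisets transfers to any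
  colouring determined by the given one; this converts the multiset of \<open>OWL\<close> colours of the
  \<open>v[w/i]\<close> into the \<open>WL\<close> refinement multiset of \<open>v[/i]\<close>, and back.\<close>

lemma image_mset_eq_coarsen:
  assumes "image_mset f A = image_mset g B"
    and "\<And>x y. x \<in># A \<Longrightarrow> y \<in># B \<Longrightarrow> f x = g y \<Longrightarrow> f' x = g' y"
  shows "image_mset f' A = image_mset g' B"
proof -
  have "rel_mset (\<lambda>x y. f x = g y) A B"
    using assms(1) by (simp add: multiset.rel_eq[symmetric] multiset.rel_map)
  then have "rel_mset (\<lambda>x y. f' x = g' y) A B"
    by (rule multiset.rel_mono_strong) (use assms(2) in blast)
  then show ?thesis
    by (simp add: multiset.rel_eq[symmetric] multiset.rel_map)
qed

definition succ_above :: "nat \<Rightarrow> nat \<Rightarrow> nat" where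
  "succ_above a q = (if q < a then q else Suc q)"

definition pred_above :: "nat \<Rightarrow> nat \<Rightarrow> nat" where
  "pred_above a p = (if p < a then p else p - 1)"

lemma length_remove_nth: "i < length v \<Longrightarrow> length (remove_nth i v) = length v - 1"
  by (simp add: remove_nth_def)

lemma nth_remove_nth:
  "i < length v \<Longrightarrow> q < length v - 1 \<Longrightarrow> remove_nth i v ! q = v ! succ_above i q"
  by (auto simp add: remove_nth_def succ_above_def nth_append min_def)

lemma remove_nth_list_update_same: "remove_nth i (v[i := w]) = remove_nth i v"
  by (simp add: remove_nth_def)

lemma succ_above_less: "j < n - 1 \<Longrightarrow> succ_above i j < n"
  by (auto simp: succ_above_def)

lemma succ_above_surj:
  assumes "a < n" "b < n" "b \<noteq> a" shows "\<exists>j < n - 1. b = succ_above a j"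
proof -
  from assms have "pred_above a b < n - 1" "b = succ_above a (pred_above a b)"
    by (auto simp: succ_above_def pred_above_def)
  then show ?thesis by blast
qed

lemma bij_betw_lessThan_endo:
  "f ` {..<n} \<subseteq> {..<n} \<Longrightarrow> inj_on f {..<n} \<Longrightarrow> bij_betw f {..<n::nat} {..<n}"
  by (simp add: bij_betw_def endo_inj_surj)

lemma map_nth_list_update:
  assumes "inj_on p {..<m}" "i < m" "p i < length u"
  shows "(map (\<lambda>q. u ! p q) [0..<m])[i := x] = map (\<lambda>q. u[p i := x] ! p q) [0..<m]"
  by (rule nth_equalityI) (use assms in \<open>auto simp: nth_list_update inj_on_eq_iff\<close>)

lemma map_nth_snoc:
  assumes "p ` {..<m} \<subseteq> {..<length u}"
  shows "map (\<lambda>q. u ! p q) [0..<m] @ [x] = map (\<lambda>q. (u @ [x]) ! (p(m := length u)) q) [0..<Suc m]"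
  by (rule nth_equalityI) (use assms in \<open>auto simp: nth_append\<close>)

lemma reindex_inv_into:
  assumes p: "bij_betw p {..<n} {..<n}" and "length w = n"
  shows "map (\<lambda>q. map (\<lambda>r. w ! p r) [0..<n] ! inv_into {..<n} p q) [0..<n] = w"
proof -
  have "inv_into {..<n} p q < n" if "q < n" for q
    using bij_betw_inv_into[OF p] that by (auto dest: bij_betwE)
  then show ?thesis
    by (intro nth_equalityI) (use assms in \<open>auto simp: bij_betw_inv_into_right\<close>)
qed

lemma reindex_bij_iff:
  assumes reindex: "\<And>u u' p m. R u u' \<Longrightarrow> inj_on p {..<m} \<Longrightarrow> p ` {..<m} \<subseteq> {..<length u} \<Longrightarrow>
      R (map (\<lambda>q. u ! p q) [0..<m]) (map (\<lambda>q. u' ! p q) [0..<m])"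
    and p: "bij_betw p {..<n} {..<n}" and "length u = n" "length u' = n"
  shows "R (map (\<lambda>q. u ! p q) [0..<n]) (map (\<lambda>q. u' ! p q) [0..<n]) \<longleftrightarrow> R u u'"
proof
  show "R u u' \<Longrightarrow> R (map (\<lambda>q. u ! p q) [0..<n]) (map (\<lambda>q. u' ! p q) [0..<n])"
    using reindex p \<open>length u = n\<close> by (simp add: bij_betw_def)
next
  let ?p' = "inv_into {..<n} p"
  have p': "bij_betw ?p' {..<n} {..<n}"
    using p by (rule bij_betw_inv_into)
  assume "R (map (\<lambda>q. u ! p q) [0..<n]) (map (\<lambda>q. u' ! p q) [0..<n])"
  from reindex[OF this, of ?p' n] p' have "R (map (\<lambda>q. map (\<lambda>r. u ! p r) [0..<n] ! ?p' q) [0..<n])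
      (map (\<lambda>q. map (\<lambda>r. u' ! p r) [0..<n] ! ?p' q) [0..<n])"
    by (simp add: bij_betw_def)
  then show "R u u'"
    unfolding reindex_inv_into[OF p assms(3)] reindex_inv_into[OF p assms(4)] .
qed

lemma remove_nth_reindex:
  "i < length v \<Longrightarrow> remove_nth i v = map (\<lambda>q. v ! succ_above i q) [0..<length v - 1]"
  by (rule nth_equalityI) (simp_all add: length_remove_nth nth_remove_nth)

lemma bij_betw_list_update_reindex:
  "i < n \<Longrightarrow> bij_betw (\<lambda>q. if q = i then n - 1 else pred_above i q) {..<n} {..<n}"
  by (rule bij_betw_lessThan_endo) (auto simp: pred_above_def inj_on_def)

lemma list_update_reindex:
  "i < length v \<Longrightarrow>
    v[i := w] = map (\<lambda>q. (remove_nth i v @ [w]) ! (if q = i then length v - 1 else pred_above i q)) [0..<length v]"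
  by (rule nth_equalityI)
    (auto simp: length_remove_nth nth_remove_nth nth_append nth_list_update pred_above_def succ_above_def)

text \<open>Entry \<open>q\<close> of \<open>(remove_nth i v)[j := w]\<close> sits at position \<open>succ_above i q\<close> of \<open>v[i := w]\<close>,
  or at position \<open>i\<close> if \<open>q = j\<close>; \<open>pred_above b\<close> renumbers positions after deleting
  \<open>b = succ_above i j\<close>.\<close>

lemma bij_betw_remove_nth_update_reindex:
  "i < n \<Longrightarrow> j < n - 1 \<Longrightarrow>
    bij_betw (\<lambda>q. pred_above (succ_above i j) (if q = j then i else succ_above i q)) {..<n - 1} {..<n - 1}"
  by (rule bij_betw_lessThan_endo) (auto simp: pred_above_def succ_above_def inj_on_def)

lemma remove_nth_update_reindex:
  "i < length v \<Longrightarrow> j < length v - 1 \<Longrightarrow>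
    (remove_nth i v)[j := w] = map (\<lambda>q. remove_nth (succ_above i j) (v[i := w]) !
      pred_above (succ_above i j) (if q = j then i else succ_above i q)) [0..<length v - 1]"
  by (rule nth_equalityI)
    (auto simp: length_remove_nth nth_remove_nth nth_list_update pred_above_def succ_above_def)

lemma atp_eq_iff:
  "atp l G u = atp l G' u' \<longleftrightarrow> length u = length u' \<and>
    (\<forall>i<length u. \<forall>j<length u. i < j \<longrightarrow>
       (u ! i = u ! j \<longleftrightarrow> u' ! i = u' ! j) \<and> (edges G (u ! i) (u ! j) \<longleftrightarrow> edges G' (u' ! i) (u' ! j))) \<and>
    (\<forall>i<length u. \<forall>j<l. u ! i \<in> labels G j \<longleftrightarrow> u' ! i \<in> labels G' j)"
proof (cases "length u = length u'")
  case True
  have upper_pairs: "(\<forall>x\<in>{0..<n}. \<forall>y\<in>{Suc x..<n}. P x y) \<longleftrightarrow> (\<forall>i<n. \<forall>j<n. i < j \<longrightarrow> P i j)"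
    for n and P :: "nat \<Rightarrow> nat \<Rightarrow> bool"
    by (auto simp: Suc_le_eq)
  have all_pairs: "(\<forall>x\<in>{0..<n}. \<forall>y\<in>{0..<m}. P x y) \<longleftrightarrow> (\<forall>i<n. \<forall>j<m. P i j)"
    for n m and P :: "nat \<Rightarrow> nat \<Rightarrow> bool"
    by auto
  show ?thesis
    unfolding atp_def using True
    by (simp only: prod.inject map_eq_conv set_upt upper_pairs all_pairs simp_thms)
next
  case False
  then have "length (fst (atp l G u)) \<noteq> length (fst (atp l G' u'))"
    by (simp add: atp_def)
  with False show ?thesis
    by auto
qed

lemma atp_eq_imp_length_eq: "atp l G u = atp l G' u' \<Longrightarrow> length u = length u'"
  by (simp add: atp_eq_iff)

lemma atp_eq_nth_iff:
  assumes "wf_graph l G" "wf_graph l G'" "atp l G u = atp l G' u'"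
    and "i < length u" "j < length u"
  shows "(u ! i = u ! j \<longleftrightarrow> u' ! i = u' ! j) \<and> (edges G (u ! i) (u ! j) \<longleftrightarrow> edges G' (u' ! i) (u' ! j))"
proof -
  have upper: "(u ! a = u ! b \<longleftrightarrow> u' ! a = u' ! b) \<and> (edges G (u ! a) (u ! b) \<longleftrightarrow> edges G' (u' ! a) (u' ! b))"
    if "a < b" "b < length u" for a b
    using assms(3) that by (simp add: atp_eq_iff)
  have sym: "edges G x y \<longleftrightarrow> edges G y x" "edges G' x' y' \<longleftrightarrow> edges G' y' x'" for x y x' y'
    using assms(1,2) unfolding wf_graph_def by blast+
  have irrefl: "\<not> edges G x x" "\<not> edges G' x' x'" for x x'
    using assms(1,2) unfolding wf_graph_def by blast+
  consider "i < j" | "i = j" | "j < i"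
    by linarith
  then show ?thesis
  proof cases
    case 1
    then show ?thesis using upper assms(5) by simp
  next
    case 2
    then show ?thesis using irrefl by simp
  next
    case 3
    then have "(u ! j = u ! i \<longleftrightarrow> u' ! j = u' ! i) \<and> (edges G (u ! j) (u ! i) \<longleftrightarrow> edges G' (u' ! j) (u' ! i))"
      using upper assms(4) by simp
    then show ?thesis using sym by metis
  qed
qed

lemma atp_reindex:
  assumes "wf_graph l G" "wf_graph l G'" "atp l G u = atp l G' u'"
    and "p ` {..<m} \<subseteq> {..<length u}"
  shows "atp l G (map (\<lambda>q. u ! p q) [0..<m]) = atp l G' (map (\<lambda>q. u' ! p q) [0..<m])"
proof -
  have p: "p i < length u" if "i < m" for i
    using assms(4) that by auto
  have labels: "\<forall>i<length u. \<forall>j<l. u ! i \<in> labels G j \<longleftrightarrow> u' ! i \<in> labels G' j"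
    using assms(3) by (simp add: atp_eq_iff)
  show ?thesis
    unfolding atp_eq_iff using atp_eq_nth_iff[OF assms(1-3) p p] labels p by simp
qed

lemma WL_eq_imp_atp_eq: "WL l G t u = WL l G' t u' \<Longrightarrow> atp l G u = atp l G' u'"
  by (induction t) auto

lemma OWL_eq_imp_atp_eq: "OWL l G t u = OWL l G' t u' \<Longrightarrow> atp l G u = atp l G' u'"
  by (induction t) auto

definition WL_signature :: "nat \<Rightarrow> 'a graph \<Rightarrow> nat \<Rightarrow> 'a list \<Rightarrow> 'a \<Rightarrow> atype \<times> colour list" where
  "WL_signature l G t u w = (atp l G (u @ [w]), map (\<lambda>i. WL l G t (u[i := w])) [0..<length u])"

lemma WL_Suc: "WL l G (Suc t) u = CWL (WL l G t u) (image_mset (WL_signature l G t u) (mset_set (verts G)))"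
  by (simp add: WL_signature_def[abs_def])

lemma WL_signature_eq_iff:
  assumes "length u' = length u"
  shows "WL_signature l G t u x = WL_signature l G' t u' y \<longleftrightarrow>
    atp l G (u @ [x]) = atp l G' (u' @ [y]) \<and> (\<forall>i<length u. WL l G t (u[i := x]) = WL l G' t (u'[i := y]))"
  using assms by (auto simp: WL_signature_def map_eq_conv)

lemma WL_reindex:
  assumes wf: "wf_graph l G" "wf_graph l G'"
  shows "WL l G t u = WL l G' t u' \<Longrightarrow> inj_on p {..<m} \<Longrightarrow> p ` {..<m} \<subseteq> {..<length u} \<Longrightarrow>
    WL l G t (map (\<lambda>q. u ! p q) [0..<m]) = WL l G' t (map (\<lambda>q. u' ! p q) [0..<m])"
proof (induction t arbitrary: u u')
  case 0
  then have "atp l G u = atp l G' u'"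
    by simp
  from atp_reindex[OF wf this 0(3)] show ?case
    by simp
next
  case (Suc t)
  let ?r = "\<lambda>u. map (\<lambda>q. u ! p q) [0..<m]"
  have len: "length u' = length u"
    using atp_eq_imp_length_eq[OF WL_eq_imp_atp_eq[OF Suc.prems(1)]] by simp
  have p: "p i < length u" if "i < m" for i
    using Suc.prems(3) that by (simp add: image_subset_iff)
  from Suc.prems(1) have WL_t: "WL l G t u = WL l G' t u'"
    and signatures: "image_mset (WL_signature l G t u) (mset_set (verts G))
      = image_mset (WL_signature l G' t u') (mset_set (verts G'))"
    unfolding WL_Suc by simp_all
  have "WL_signature l G t (?r u) x = WL_signature l G' t (?r u') y"
    if "WL_signature l G t u x = WL_signature l G' t u' y" for x y
  proof -
    from that have atp_snoc: "atp l G (u @ [x]) = atp l G' (u' @ [y])"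
      and WL_update: "\<And>i. i < length u \<Longrightarrow> WL l G t (u[i := x]) = WL l G' t (u'[i := y])"
      by (simp_all add: WL_signature_eq_iff len)
    have "atp l G (?r u @ [x]) = atp l G' (?r u' @ [y])"
      unfolding map_nth_snoc[OF Suc.prems(3)] map_nth_snoc[OF Suc.prems(3)[unfolded len[symmetric]]] len
      by (rule atp_reindex[OF wf atp_snoc]) (auto simp: less_Suc_eq dest: p)
    moreover have "WL l G t ((?r u)[i := x]) = WL l G' t ((?r u')[i := y])" if "i < m" for i
      unfolding map_nth_list_update[OF Suc.prems(2) that p[OF that]]
        map_nth_list_update[OF Suc.prems(2) that p[OF that, unfolded len[symmetric]]]
      by (rule Suc.IH[OF WL_update[OF p[OF that]] Suc.prems(2)]) (use Suc.prems(3) in simp)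
    ultimately show ?thesis
      by (simp add: WL_signature_eq_iff)
  qed
  then have "image_mset (WL_signature l G t (?r u)) (mset_set (verts G))
      = image_mset (WL_signature l G' t (?r u')) (mset_set (verts G'))"
    by (rule image_mset_eq_coarsen[OF signatures])
  with Suc.IH[OF WL_t Suc.prems(2,3)] show ?case
    unfolding WL_Suc by simp
qed

lemma atp_list_update_iff:
  assumes "wf_graph l G" "wf_graph l G'" "length v' = length v" "i < length v"
  shows "atp l G (v[i := x]) = atp l G' (v'[i := y]) \<longleftrightarrow>
    atp l G (remove_nth i v @ [x]) = atp l G' (remove_nth i v' @ [y])"
  unfolding list_update_reindex[OF assms(4)] list_update_reindex[of i v', unfolded assms(3), OF assms(4)]
  by (rule reindex_bij_iff[where R = "\<lambda>u u'. atp l G u = atp l G' u'"])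
    (use atp_reindex[OF assms(1,2)] bij_betw_list_update_reindex[OF assms(4)] assms(3,4)
      in \<open>simp_all add: length_remove_nth\<close>)

lemma WL_remove_nth_update_iff:
  assumes "wf_graph l G" "wf_graph l G'" "length v' = length v" "i < length v" "j < length v - 1"
  shows "WL l G t ((remove_nth i v)[j := x]) = WL l G' t ((remove_nth i v')[j := y]) \<longleftrightarrow>
    WL l G t (remove_nth (succ_above i j) (v[i := x])) = WL l G' t (remove_nth (succ_above i j) (v'[i := y]))"
  unfolding remove_nth_update_reindex[OF assms(4,5)]
    remove_nth_update_reindex[of i v', unfolded assms(3), OF assms(4,5)]
  by (rule reindex_bij_iff[where R = "\<lambda>u u'. WL l G t u = WL l G' t u'"])
    (use WL_reindex[OF assms(1,2)] bij_betw_remove_nth_update_reindex[OF assms(4,5)] assms(3,5)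
      succ_above_less[OF assms(5)] in \<open>simp_all add: length_remove_nth\<close>)

lemma OWL_eq_imp_WL_remove_nth_eq:
  assumes wf: "wf_graph l G" "wf_graph l G'"
  shows "OWL l G t v = OWL l G' t v' \<Longrightarrow> i < length v \<Longrightarrow>
    WL l G t (remove_nth i v) = WL l G' t (remove_nth i v')"
proof (induction t arbitrary: v v' i)
  case 0
  then have "atp l G v = atp l G' v'"
    by simp
  from atp_reindex[OF wf this, of "succ_above i" "length v - 1"] show ?case
    using 0 atp_eq_imp_length_eq[OF \<open>atp l G v = atp l G' v'\<close>]
    by (simp add: remove_nth_reindex image_subset_iff succ_above_less)
next
  case (Suc t)
  have len: "length v' = length v"
    using atp_eq_imp_length_eq[OF OWL_eq_imp_atp_eq[OF Suc.prems(1)]] by simp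
  from Suc.prems have OWL_t: "OWL l G t v = OWL l G' t v'"
    and updates: "image_mset (\<lambda>w. OWL l G t (v[i := w])) (mset_set (verts G))
      = image_mset (\<lambda>w. OWL l G' t (v'[i := w])) (mset_set (verts G'))"
    by (simp_all add: len map_eq_conv)
  have "WL_signature l G t (remove_nth i v) x = WL_signature l G' t (remove_nth i v') y"
    if "OWL l G t (v[i := x]) = OWL l G' t (v'[i := y])" for x y
  proof -
    have "atp l G (remove_nth i v @ [x]) = atp l G' (remove_nth i v' @ [y])"
      using OWL_eq_imp_atp_eq[OF that] atp_list_update_iff[OF wf len Suc.prems(2)] by simp
    moreover have "WL l G t ((remove_nth i v)[j := x]) = WL l G' t ((remove_nth i v')[j := y])"
      if "j < length v - 1" for j
      using WL_remove_nth_update_iff[OF wf len Suc.prems(2) that]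
        Suc.IH[OF \<open>OWL l G t (v[i := x]) = OWL l G' t (v'[i := y])\<close>] succ_above_less[OF that]
      by simp
    ultimately show ?thesis
      using Suc.prems(2) len by (simp add: WL_signature_eq_iff length_remove_nth)
  qed
  then have "image_mset (WL_signature l G t (remove_nth i v)) (mset_set (verts G))
      = image_mset (WL_signature l G' t (remove_nth i v')) (mset_set (verts G'))"
    by (rule image_mset_eq_coarsen[OF updates])
  with Suc.IH[OF OWL_t Suc.prems(2)] show ?case
    unfolding WL_Suc by simp
qed

lemma WL_remove_nth_eq_imp_OWL_eq:
  assumes wf: "wf_graph l G" "wf_graph l G'"
  shows "atp l G v = atp l G' v' \<Longrightarrow> \<forall>i < length v. WL l G t (remove_nth i v) = WL l G' t (remove_nth i v') \<Longrightarrow>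
    OWL l G t v = OWL l G' t v'"
proof (induction t arbitrary: v v')
  case 0
  then show ?case
    by simp
next
  case (Suc t)
  have len: "length v' = length v"
    using atp_eq_imp_length_eq[OF Suc.prems(1)] by simp
  have WL_t: "\<forall>i < length v. WL l G t (remove_nth i v) = WL l G' t (remove_nth i v')"
    using Suc.prems(2) unfolding WL_Suc by simp
  have "image_mset (\<lambda>w. OWL l G t (v[i := w])) (mset_set (verts G))
      = image_mset (\<lambda>w. OWL l G' t (v'[i := w])) (mset_set (verts G'))"
    if i: "i < length v" for i
  proof (rule image_mset_eq_coarsen)
    show "image_mset (WL_signature l G t (remove_nth i v)) (mset_set (verts G))
      = image_mset (WL_signature l G' t (remove_nth i v')) (mset_set (verts G'))"
      using Suc.prems(2) i unfolding WL_Suc by simp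
    fix x y
    assume "WL_signature l G t (remove_nth i v) x = WL_signature l G' t (remove_nth i v') y"
    then have atp_snoc: "atp l G (remove_nth i v @ [x]) = atp l G' (remove_nth i v' @ [y])"
      and WL_update: "\<And>j. j < length v - 1 \<Longrightarrow>
        WL l G t ((remove_nth i v)[j := x]) = WL l G' t ((remove_nth i v')[j := y])"
      using i len by (simp_all add: WL_signature_eq_iff length_remove_nth)
    have "WL l G t (remove_nth b (v[i := x])) = WL l G' t (remove_nth b (v'[i := y]))"
      if b: "b < length v" for b
    proof (cases "b = i")
      case True
      then show ?thesis
        using WL_t i by (simp add: remove_nth_list_update_same)
    next
      case False
      then obtain j where "j < length v - 1" "b = succ_above i j"
        using succ_above_surj[OF i b] by blast
      then show ?thesis
        using WL_remove_nth_update_iff[OF wf len i] WL_update by blast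
    qed
    then show "OWL l G t (v[i := x]) = OWL l G' t (v'[i := y])"
      using Suc.IH atp_snoc atp_list_update_iff[OF wf len i] by simp
  qed
  with Suc.IH[OF Suc.prems(1) WL_t] show ?case
    using len by (simp add: map_eq_conv)
qed

theorem lemmaA1:
  fixes G :: "'a graph" and G' :: "'b graph" and l k t :: nat
    and vs :: "'a list" and vs' :: "'b list"
  assumes "k \<ge> 1"
    and "wf_graph l G" and "wf_graph l G'"
    and "length vs = k + 1" and "set vs \<subseteq> verts G"
    and "length vs' = k + 1" and "set vs' \<subseteq> verts G'"
  shows "OWL l G t vs = OWL l G' t vs' \<longleftrightarrow>
           (atp l G vs = atp l G' vs' \<and>
            (\<forall>i < k + 1. WL l G t (remove_nth i vs) = WL l G' t (remove_nth i vs')))"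
proof
  assume "OWL l G t vs = OWL l G' t vs'"
  then show "atp l G vs = atp l G' vs' \<and>
      (\<forall>i < k + 1. WL l G t (remove_nth i vs) = WL l G' t (remove_nth i vs'))"
    using OWL_eq_imp_atp_eq OWL_eq_imp_WL_remove_nth_eq[OF assms(2,3)] assms(4) by metis
next
  assume "atp l G vs = atp l G' vs' \<and>
      (\<forall>i < k + 1. WL l G t (remove_nth i vs) = WL l G' t (remove_nth i vs'))"
  then show "OWL l G t vs = OWL l G' t vs'"
    using WL_remove_nth_eq_imp_OWL_eq[OF assms(2,3)] assms(4) by simp
qed

end
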